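(* Let $N_o>0$, $\alpha>2$ and $\eta(d)=\frac{1}{(1+d)^\alpha}$. (a) Given $C,D>0$ and a positive integer $m$, there exist $t,r\in\mathbb{R}^2$ and a set $T\subset\mathbb{R}^2$ with $m$ elements such that $(t,r,T)$ satisfies DC$(C,D)$ and, for every $P>0$, $$\mathrm{SINR}(t,r,T,P,N_o,\eta)\le\frac17\Big(\frac{1+2C(2+D)}{1+C}\Big)^\alpha\Big(\sum_{k=1}^{\lfloor\sqrt{m/7}-2\rfloor}\frac{1}{k^{\alpha-1}}\Big)^{-1}.$$ (b) If $\beta>0$ and $\frac17\Big(\frac{1+2C(2+D)}{1+C}\Big)^\alpha\Big(\sum_{k=1}^\infty\frac{1}{k^{\alpha-1}}\Big)^{-1}<\beta$, then $(C,D)$ does not ensure SINR$_\beta$; i.e., there exists $(t,r,T)$ satisfying DC$(C,D)$ such that for all $P>0$, $\mathrm{SINR}(t,r,T,P,N_o,\eta)<\beta$. (c) If $\beta>0$ and $\frac17\Big(\sum_{k=1}^\infty\frac{1}{k^{\alpha-1}}\Big)^{-1}<\beta$, then all sufficiently small $C,D>0$ do not ensure SINR$_\beta$.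
   Context: $\mathrm{SINR}(t,r,T,P,N_o,\eta)=\dfrac{P\eta(\|t-r\|)}{N_o+\sum_{t'\in T}P\eta(\|t'-r\|)}$ for $t,r\in\mathbb{R}^2$, $T$ a finite subset of $\mathbb{R}^2$, $P>0$. $(t,r,T)$ satisfies DC$(C,D)$ if $\|t-r\|\le C$ and $\|t'-t''\|\ge C(2+D)$ for all distinct $t',t''\in T\cup\{t\}$. The pair $(C,D)$ ensures SINR$_\beta$ if there exists $P>0$ such that every triple $(t,r,T)$ satisfying DC$(C,D)$ has $\mathrm{SINR}\ge\beta$. *)

theory Defs
  imports "HOL-Analysis.Analysis"
begin

type_synonym point = "real ^ 2"

definition eta :: "real \<Rightarrow> real \<Rightarrow> real" where
  "eta \<alpha> d = 1 / (1 + d) powr \<alpha>"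

definition SINR :: "point \<Rightarrow> point \<Rightarrow> point set \<Rightarrow> real \<Rightarrow> real \<Rightarrow> (real \<Rightarrow> real) \<Rightarrow> real" where
  "SINR t r T P No \<eta> =
     P * \<eta> (norm (t - r)) / (No + (\<Sum>t'\<in>T. P * \<eta> (norm (t' - r))))"

definition DC :: "real \<Rightarrow> real \<Rightarrow> point \<Rightarrow> point \<Rightarrow> point set \<Rightarrow> bool" where
  "DC C D t r T \<longleftrightarrow> norm (t - r) \<le> C \<and>
     (\<forall>t'\<in>T \<union> {t}. \<forall>t''\<in>T \<union> {t}. t' \<noteq> t'' \<longrightarrow> norm (t' - t'') \<ge> C * (2 + D))"

definition ensures_SINR :: "real \<Rightarrow> real \<Rightarrow> (real \<Rightarrow> real) \<Rightarrow> real \<Rightarrow> real \<Rightarrow> bool" where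
  "ensures_SINR \<beta> No \<eta> C D \<longleftrightarrow>
     (\<exists>P>0. \<forall>t r T. finite T \<longrightarrow> DC C D t r T \<longrightarrow> SINR t r T P No \<eta> \<ge> \<beta>)"

end

theory Submission
  imports Defs
begin

text \<open>Put the transmitter at the origin, the receiver at distance C from it, and the interferers
  on the square lattice of spacing L = C(2+D), which satisfies the distance constraint. The k-th
  square ring around the origin has 8k lattice points, each at distance at most k(1+2L) - 1 from
  the receiver, so the interference is at least 8 (1+2L)^(-\<alpha>) \<Sum> k^(1-\<alpha>) over the rings used,
  while the signal is (1+C)^(-\<alpha>). This bounds the SINR by 1/8 of the claimed expression for every
  power; (b) follows by taking so many rings that the partial sum is close to its limit, and
  (c) because the geometric factor ((1+2L)/(1+C))^\<alpha> tends to 1 as C and D tend to 0.\<close>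

lemma norm_vector_2: "norm (vector [x, y] :: real^2) = sqrt (x^2 + y^2)"
  unfolding norm_vec_def L2_set_def sum_2 by simp

definition grid_point :: "real \<Rightarrow> int \<times> int \<Rightarrow> point" where
  "grid_point L p = vector [L * of_int (fst p), L * of_int (snd p)]"

definition grid_box :: "nat \<Rightarrow> (int \<times> int) set" where
  "grid_box K = {-int K..int K} \<times> {-int K..int K}"

definition cheb_norm :: "int \<times> int \<Rightarrow> nat" where
  "cheb_norm p = nat (max \<bar>fst p\<bar> \<bar>snd p\<bar>)"

lemma finite_grid_box [simp]: "finite (grid_box K)"
  by (simp add: grid_box_def)

lemma card_grid_box: "card (grid_box K) = (2 * K + 1)^2"
proof -
  have "nat (int K + 1 + int K) = 2 * K + 1" by simp
  then show ?thesis
    unfolding grid_box_def card_cartesian_product by (simp add: power2_eq_square)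
qed

lemma grid_box_mono: "K \<le> K' \<Longrightarrow> grid_box K \<subseteq> grid_box K'"
  by (auto simp: grid_box_def)

lemma grid_box_0: "grid_box 0 = {(0, 0)}"
  by (auto simp: grid_box_def)

lemma cheb_norm_ge_1: "p \<noteq> (0, 0) \<Longrightarrow> 1 \<le> cheb_norm p"
  by (cases p) (auto simp: cheb_norm_def)

lemma cheb_norm_grid_ring: "p \<in> grid_box (Suc K) - grid_box K \<Longrightarrow> cheb_norm p = Suc K"
  by (auto simp: grid_box_def cheb_norm_def)

lemma card_grid_ring: "card (grid_box (Suc K) - grid_box K) = 8 * Suc K"
proof -
  have "card (grid_box (Suc K) - grid_box K) = card (grid_box (Suc K)) - card (grid_box K)"
    by (rule card_Diff_subset) (auto simp: grid_box_mono)
  then show ?thesis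
    unfolding card_grid_box by (simp add: power2_eq_square algebra_simps)
qed

lemma sum_punctured_grid_box_ge:
  fixes f :: "int \<times> int \<Rightarrow> real" and c :: "nat \<Rightarrow> real"
  assumes "\<And>p. p \<noteq> (0, 0) \<Longrightarrow> c (cheb_norm p) \<le> f p"
  shows "(\<Sum>k = 1..K. real (8 * k) * c k) \<le> (\<Sum>p \<in> grid_box K - {(0, 0)}. f p)"
proof (induction K)
  case 0
  then show ?case by (simp add: grid_box_0)
next
  case (Suc K)
  define R where "R = grid_box (Suc K) - grid_box K"
  have split: "grid_box (Suc K) - {(0, 0)} = (grid_box K - {(0, 0)}) \<union> R"
    using grid_box_mono[of K "Suc K"] by (auto simp: R_def grid_box_def)
  have "real (8 * Suc K) * c (Suc K) = (\<Sum>p \<in> R. c (Suc K))"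
    by (simp add: R_def card_grid_ring)
  also have "\<dots> \<le> (\<Sum>p \<in> R. f p)"
  proof (rule sum_mono)
    fix p assume "p \<in> R"
    then have "cheb_norm p = Suc K" "p \<noteq> (0, 0)"
      by (auto simp: R_def cheb_norm_grid_ring grid_box_def)
    then show "c (Suc K) \<le> f p" using assms by metis
  qed
  finally have "real (8 * Suc K) * c (Suc K) \<le> (\<Sum>p \<in> R. f p)" .
  moreover have "(\<Sum>p \<in> grid_box (Suc K) - {(0, 0)}. f p)
      = (\<Sum>p \<in> grid_box K - {(0, 0)}. f p) + (\<Sum>p \<in> R. f p)"
    unfolding split by (rule sum.union_disjoint) (auto simp: R_def)
  ultimately show ?case using Suc.IH by simp
qed

lemma grid_point_origin [simp]: "grid_point L (0, 0) = 0"
  by (simp add: grid_point_def vec_eq_iff forall_2)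

lemma dist_grid_point_ge:
  assumes "0 \<le> L" "p \<noteq> q"
  shows "L \<le> norm (grid_point L p - grid_point L q)"
proof -
  have diff: "(grid_point L p - grid_point L q) $ 1 = L * of_int (fst p - fst q)"
    "(grid_point L p - grid_point L q) $ 2 = L * of_int (snd p - snd q)"
    by (simp_all add: grid_point_def algebra_simps)
  have "1 \<le> \<bar>of_int (fst p - fst q) :: real\<bar> \<or> 1 \<le> \<bar>of_int (snd p - snd q) :: real\<bar>"
    using assms(2) by (cases p, cases q) auto
  then have "L \<le> \<bar>(grid_point L p - grid_point L q) $ 1\<bar> \<or>
      L \<le> \<bar>(grid_point L p - grid_point L q) $ 2\<bar>"
    unfolding diff abs_mult using assms(1) mult_left_mono[of 1 _ L] by auto
  then obtain i where "L \<le> \<bar>(grid_point L p - grid_point L q) $ i\<bar>"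
    by blast
  then show ?thesis
    by (rule order_trans[OF _ component_le_norm_cart])
qed

lemma inj_grid_point:
  assumes "0 < L"
  shows "inj (grid_point L)"
proof (rule injI)
  fix p q
  assume "grid_point L p = grid_point L q"
  then show "p = q" using dist_grid_point_ge[of L p q] assms by fastforce
qed

lemma norm_grid_point_le:
  fixes L :: real
  assumes "0 \<le> L"
  shows "norm (grid_point L p) \<le> 3/2 * cheb_norm p * L"
proof -
  obtain i j where p: "p = (i, j)" by fastforce
  define k where "k = real (cheb_norm p)"
  have "real_of_int i ^ 2 \<le> k ^ 2" "real_of_int j ^ 2 \<le> k ^ 2"
    by (auto simp: k_def cheb_norm_def p abs_le_square_iff[symmetric] simp del: of_int_abs)
  then have "real_of_int i ^ 2 + real_of_int j ^ 2 \<le> 9/4 * k ^ 2"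
    using zero_le_power2[of k] by linarith
  then have "(L * of_int i) ^ 2 + (L * of_int j) ^ 2 \<le> L ^ 2 * (9/4 * k ^ 2)"
    unfolding power_mult_distrib distrib_left[symmetric] by (rule mult_left_mono) simp
  also have "\<dots> = (3/2 * k * L) ^ 2"
    by (simp add: power2_eq_square)
  finally have "sqrt ((L * of_int i) ^ 2 + (L * of_int j) ^ 2) \<le> 3/2 * k * L"
    using assms by (intro real_le_lsqrt) (simp_all add: k_def)
  then show ?thesis
    by (simp add: grid_point_def p norm_vector_2 k_def)
qed

lemma eta_grid_point_ge:
  fixes L :: real
  assumes "0 \<le> \<alpha>" "0 \<le> L" "norm r \<le> L / 2" "p \<noteq> (0, 0)"
  shows "1 / (cheb_norm p * (1 + 2 * L)) powr \<alpha> \<le> eta \<alpha> (norm (grid_point L p - r))"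
proof -
  define k where "k = real (cheb_norm p)"
  define d where "d = norm (grid_point L p - r)"
  have k: "1 \<le> k" using cheb_norm_ge_1[OF assms(4)] by (simp add: k_def)
  have "d \<le> 3/2 * k * L + L / 2"
    using norm_triangle_ineq4[of "grid_point L p" r] norm_grid_point_le[OF assms(2), of p] assms(3)
    by (simp add: d_def k_def)
  moreover have "L \<le> k * L" using mult_right_mono[OF k assms(2)] by simp
  ultimately have "1 + d \<le> k * (1 + 2 * L)"
    using k by (simp add: algebra_simps)
  then have "(1 + d) powr \<alpha> \<le> (k * (1 + 2 * L)) powr \<alpha>"
    using assms(1) by (intro powr_mono2) (auto simp: d_def)
  then have "1 / (k * (1 + 2 * L)) powr \<alpha> \<le> 1 / (1 + d) powr \<alpha>"
    using k assms(2) by (intro divide_left_mono mult_pos_pos) (auto simp: d_def add_nonneg_eq_0_iff)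
  then show ?thesis
    by (simp add: eta_def d_def k_def)
qed

lemma DC_grid_configuration:
  assumes "0 \<le> C * (2 + D)" "norm r \<le> C"
  shows "DC C D 0 r (grid_point (C * (2 + D)) ` G)"
proof -
  let ?g = "grid_point (C * (2 + D))"
  have "insert 0 (?g ` G) = ?g ` insert (0, 0) G"
    by simp
  moreover have "C * (2 + D) \<le> norm (x - y)"
    if "x \<in> ?g ` insert (0, 0) G" "y \<in> ?g ` insert (0, 0) G" and "x \<noteq> y" for x y
  proof -
    from that(1,2) obtain p q where xy: "x = ?g p" "y = ?g q" by blast
    with \<open>x \<noteq> y\<close> have "p \<noteq> q" by blast
    then show ?thesis unfolding xy by (rule dist_grid_point_ge[OF assms(1)])
  qed
  ultimately show ?thesis
    using assms(2) unfolding DC_def by (auto simp del: image_insert)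
qed

lemma SINR_le_of_interference_ge:
  assumes "0 < P" "0 \<le> No" "0 \<le> \<eta> (norm (t - r))" "0 < W"
    and "W \<le> (\<Sum>t' \<in> T. \<eta> (norm (t' - r)))"
  shows "SINR t r T P No \<eta> \<le> \<eta> (norm (t - r)) / W"
proof -
  have PW: "0 < P * W" using assms by simp
  have le: "P * W \<le> No + P * (\<Sum>t' \<in> T. \<eta> (norm (t' - r)))"
    using assms by (intro add_increasing mult_left_mono) auto
  with PW have "0 < No + P * (\<Sum>t' \<in> T. \<eta> (norm (t' - r)))"
    by linarith
  with PW have "0 < (No + P * (\<Sum>t' \<in> T. \<eta> (norm (t' - r)))) * (P * W)"
    by simp
  then have "SINR t r T P No \<eta> \<le> P * \<eta> (norm (t - r)) / (P * W)"
    unfolding SINR_def sum_distrib_left[symmetric]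
    using le assms by (intro divide_left_mono) auto
  then show ?thesis using assms(1) by simp
qed

lemma SINR_grid_le:
  assumes "0 < C" "0 \<le> D" "0 \<le> \<alpha>" "0 \<le> No" "0 < P" "1 \<le> K"
    and "finite G" "grid_box K - {(0, 0)} \<subseteq> G"
  shows "SINR 0 (vector [C, 0]) (grid_point (C * (2 + D)) ` G) P No (eta \<alpha>)
    \<le> (1/8) * ((1 + 2 * C * (2 + D)) / (1 + C)) powr \<alpha> / (\<Sum>k = 1..K. 1 / real k powr (\<alpha> - 1))"
proof -
  define L where "L = C * (2 + D)"
  define M where "M = 1 + 2 * C * (2 + D)"
  define S where "S = (\<Sum>k = 1..K. 1 / real k powr (\<alpha> - 1))"
  define r :: point where "r = vector [C, 0]"
  define w where "w p = eta \<alpha> (norm (grid_point L p - r))" for p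
  have L: "0 < L" "norm r \<le> L / 2"
    using assms(1,2) by (simp_all add: L_def r_def norm_vector_2)
  have M: "0 < M" using L by (simp add: M_def L_def mult.assoc)
  have S: "0 < S" unfolding S_def using assms(6) by (intro sum_pos) auto
  have ring_term: "real (8 * k) * (1 / (k * M) powr \<alpha>) = 8 / M powr \<alpha> * (1 / k powr (\<alpha> - 1))"
    if "1 \<le> k" for k
  proof -
    have "(k * M) powr \<alpha> = k * k powr (\<alpha> - 1) * M powr \<alpha>"
      using that by (simp add: powr_mult powr_diff)
    then show ?thesis using that M by (simp add: field_simps)
  qed
  have "8 / M powr \<alpha> * S = (\<Sum>k = 1..K. real (8 * k) * (1 / (k * M) powr \<alpha>))"
    unfolding S_def sum_distrib_left
  proof (rule sum.cong)
    fix k assume "k \<in> {1..K}"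
    then show "8 / M powr \<alpha> * (1 / real k powr (\<alpha> - 1)) = real (8 * k) * (1 / (k * M) powr \<alpha>)"
      by (intro ring_term[symmetric]) simp
  qed simp
  also have "\<dots> \<le> (\<Sum>p \<in> grid_box K - {(0, 0)}. w p)"
    using eta_grid_point_ge[OF assms(3) _ L(2)] L(1)
    by (intro sum_punctured_grid_box_ge) (simp add: w_def M_def L_def mult.assoc)
  also have "\<dots> \<le> (\<Sum>p \<in> G. w p)"
    using assms(7,8) by (intro sum_mono2) (auto simp: w_def eta_def)
  also have "\<dots> = (\<Sum>t' \<in> grid_point L ` G. eta \<alpha> (norm (t' - r)))"
    using inj_grid_point[OF L(1)] by (simp add: sum.reindex inj_on_subset w_def)
  finally have "SINR 0 r (grid_point L ` G) P No (eta \<alpha>) \<le> eta \<alpha> (norm (0 - r)) / (8 / M powr \<alpha> * S)"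
    using assms M S by (intro SINR_le_of_interference_ge) (auto simp: eta_def)
  also have "\<dots> = (1/8) * (M / (1 + C)) powr \<alpha> / S"
  proof -
    have "eta \<alpha> (norm (0 - r)) = 1 / (1 + C) powr \<alpha>"
      using assms(1) by (simp add: r_def norm_vector_2 eta_def)
    then show ?thesis
      using assms(1) M by (simp add: powr_divide)
  qed
  finally show ?thesis
    unfolding L_def M_def S_def r_def .
qed

lemma summable_inverse_powr_Suc:
  assumes "1 < s"
  shows "summable (\<lambda>k. 1 / real (Suc k) powr s)"
proof -
  have "summable (\<lambda>n. real n powr (- s))" using assms by (simp add: summable_real_powr_iff)
  then have "summable (\<lambda>n. real (Suc n) powr (- s))" by (subst summable_Suc_iff)
  then show ?thesis by (simp add: powr_minus_divide)
qed

lemma eventually_divide_partial_sum_less: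
  fixes f :: "nat \<Rightarrow> real"
  assumes "summable f" "suminf f \<noteq> 0" "A / suminf f < \<beta>"
  shows "\<forall>\<^sub>F K in sequentially. A / (\<Sum>k < K. f k) < \<beta>"
  using tendsto_divide[OF tendsto_const summable_LIMSEQ[OF assms(1)] assms(2)] assms(3)
  by (rule order_tendstoD(2))

lemma not_ensures_SINR_if_bad_configuration:
  assumes "\<exists>t r T. finite T \<and> DC C D t r T \<and> (\<forall>P > 0. SINR t r T P No \<eta> < \<beta>)"
  shows "\<not> ensures_SINR \<beta> No \<eta> C D"
  using assms unfolding ensures_SINR_def by (meson not_le)

lemma bad_configuration_exists:
  assumes "0 < C" "0 \<le> D" "0 \<le> No" "2 < \<alpha>" "0 < \<beta>"
    and "(1/7) * ((1 + 2 * C * (2 + D)) / (1 + C)) powr \<alpha>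
          / (\<Sum>k. 1 / real (Suc k) powr (\<alpha> - 1)) < \<beta>"
  shows "\<exists>t r :: point. \<exists>T. finite T \<and> DC C D t r T \<and> (\<forall>P > 0. SINR t r T P No (eta \<alpha>) < \<beta>)"
proof -
  define A where "A = ((1 + 2 * C * (2 + D)) / (1 + C)) powr \<alpha>"
  define f where "f = (\<lambda>k. 1 / real (Suc k) powr (\<alpha> - 1))"
  have f: "summable f" unfolding f_def using assms(4) by (intro summable_inverse_powr_Suc) simp
  have "0 < suminf f" using f by (intro suminf_pos) (simp_all add: f_def)
  then have "suminf f \<noteq> 0" by simp
  moreover have "(1/7) * A / suminf f < \<beta>"
    using assms(6) by (simp only: A_def f_def)
  ultimately have "\<forall>\<^sub>F K in sequentially. (1/7) * A / (\<Sum>k < K. f k) < \<beta>"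
    by (rule eventually_divide_partial_sum_less[OF f])
  then have "\<forall>\<^sub>F K in sequentially. (1/7) * A / (\<Sum>k < K. f k) < \<beta> \<and> 1 \<le> K"
    using eventually_ge_at_top by (rule eventually_conj)
  then obtain K where K: "1 \<le> K" "(1/7) * A / (\<Sum>k < K. f k) < \<beta>"
    unfolding eventually_sequentially by blast
  define S where "S = (\<Sum>k = 1..K. 1 / real k powr (\<alpha> - 1))"
  have "S = (\<Sum>k < K. f k)" unfolding S_def f_def by (simp add: sum.atLeast1_atMost_eq)
  with K(2) have "(1/7) * A / S < \<beta>" by simp
  define G where "G = grid_box K - {(0, 0)}"
  have "SINR 0 (vector [C, 0]) (grid_point (C * (2 + D)) ` G) P No (eta \<alpha>) < \<beta>" if "0 < P" for P
  proof -
    have "SINR 0 (vector [C, 0]) (grid_point (C * (2 + D)) ` G) P No (eta \<alpha>) \<le> (1/8) * A / S"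
      unfolding A_def S_def using assms K(1) that by (intro SINR_grid_le) (auto simp: G_def)
    also have "\<dots> \<le> (1/7) * A / S"
      by (intro divide_right_mono mult_right_mono) (auto simp: A_def S_def sum_nonneg)
    finally show ?thesis using \<open>(1/7) * A / S < \<beta>\<close> by linarith
  qed
  moreover have "DC C D 0 (vector [C, 0]) (grid_point (C * (2 + D)) ` G)"
    using assms(1,2) by (intro DC_grid_configuration) (simp_all add: norm_vector_2)
  ultimately show ?thesis by (metis G_def finite_Diff finite_grid_box finite_imageI)
qed

lemma small_parameters_not_ensure_SINR:
  assumes "0 \<le> No" "2 < \<alpha>" "0 < \<beta>" "(1/7) / (\<Sum>k. 1 / real (Suc k) powr (\<alpha> - 1)) < \<beta>"
  shows "\<exists>\<epsilon> > 0. \<forall>C D. 0 < C \<longrightarrow> C < \<epsilon> \<longrightarrow> 0 < D \<longrightarrow> D < \<epsilon> \<longrightarrow>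
    \<not> ensures_SINR \<beta> No (eta \<alpha>) C D"
proof -
  define Z where "Z = (\<Sum>k. 1 / real (Suc k) powr (\<alpha> - 1))"
  have "0 < Z"
    unfolding Z_def using assms(2) by (intro suminf_pos summable_inverse_powr_Suc) auto
  then have Z: "1 < 7 * \<beta> * Z" using assms(4) by (simp add: Z_def field_simps)
  define c where "c = (7 * \<beta> * Z) powr (1 / \<alpha>)"
  have c: "1 < c" "c powr \<alpha> = 7 * \<beta> * Z"
    using Z assms(2) by (simp_all add: c_def powr_powr)
  define \<epsilon> where "\<epsilon> = min 1 ((c - 1) / 6)"
  have "\<not> ensures_SINR \<beta> No (eta \<alpha>) C D" if C: "0 < C" "C < \<epsilon>" and D: "0 < D" "D < \<epsilon>" for C D
  proof -
    define b where "b = (1 + 2 * C * (2 + D)) / (1 + C)"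
    have "b \<le> 1 + 2 * C * (2 + D)"
      using C D mult_left_mono[of 1 "1 + C" "1 + 2 * C * (2 + D)"] by (simp add: b_def divide_le_eq)
    also have "\<dots> \<le> 1 + 6 * C" using C D by (simp add: \<epsilon>_def)
    also have "\<dots> < c" using C by (simp add: \<epsilon>_def)
    finally have "b powr \<alpha> < c powr \<alpha>"
      using C D assms(2) by (intro powr_less_mono2) (auto simp: b_def)
    then have "(1/7) * b powr \<alpha> / Z < \<beta>"
      using c(2) \<open>0 < Z\<close> by (simp add: field_simps)
    then show ?thesis
      using C(1) D(1) assms(1-3) unfolding b_def Z_def
      by (intro not_ensures_SINR_if_bad_configuration bad_configuration_exists) auto
  qed
  moreover have "0 < \<epsilon>" using c(1) by (simp add: \<epsilon>_def)
  ultimately show ?thesis by blast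
qed

lemma card_grid_box_le:
  assumes "0 < m"
  shows "card (grid_box (nat \<lfloor>sqrt (real m / 7) - 2\<rfloor>)) \<le> m"
proof -
  define K where "K = nat \<lfloor>sqrt (real m / 7) - 2\<rfloor>"
  have "(2 * K + 1)^2 \<le> m"
  proof (cases "K = 0")
    case True
    then show ?thesis using assms by simp
  next
    case False
    then have "real K + 2 \<le> sqrt (real m / 7)"
      unfolding K_def by linarith
    then have "(real K + 2)^2 \<le> real m / 7"
      using power_mono[of "real K + 2" "sqrt (real m / 7)" 2] by simp
    moreover have "real ((2 * K + 1)^2) \<le> 7 * (real K + 2)^2"
      by (simp add: power2_eq_square algebra_simps)
    ultimately show ?thesis by linarith
  qed
  then show ?thesis by (simp add: K_def card_grid_box)
qed

lemma configuration_of_card_exists: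
  assumes "0 < C" "0 \<le> D" "0 \<le> \<alpha>" "0 \<le> No" "0 < m"
  shows "\<exists>t r :: point. \<exists>T. finite T \<and> card T = m \<and> DC C D t r T \<and>
    (\<forall>P > 0. 0 < (\<Sum>k = 1..nat \<lfloor>sqrt (real m / 7) - 2\<rfloor>. 1 / real k powr (\<alpha> - 1)) \<longrightarrow>
      SINR t r T P No (eta \<alpha>) \<le> (1/7) * ((1 + 2 * C * (2 + D)) / (1 + C)) powr \<alpha>
        / (\<Sum>k = 1..nat \<lfloor>sqrt (real m / 7) - 2\<rfloor>. 1 / real k powr (\<alpha> - 1)))"
proof -
  define K where "K = nat \<lfloor>sqrt (real m / 7) - 2\<rfloor>"
  define L where "L = C * (2 + D)"
  define B where "B = grid_box K - {(0, 0)}"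
  \<comment> \<open>padding up to exactly m points\<close>
  define E where "E = (\<lambda>n. (int K + 1 + int n, 0 :: int)) ` {..< m - card B}"
  define G where "G = B \<union> E"
  have "card B \<le> m"
    using card_mono[of "grid_box K" B] card_grid_box_le[OF assms(5)] by (simp add: B_def K_def)
  moreover have "card E = m - card B" unfolding E_def by (simp add: card_image inj_on_def)
  moreover have "B \<inter> E = {}" by (auto simp: B_def E_def grid_box_def)
  ultimately have "card G = m" by (simp add: G_def B_def E_def card_Un_disjoint)
  moreover have "finite G" by (simp add: G_def B_def E_def)
  moreover have "card (grid_point L ` G) = card G"
    using assms(1,2) inj_grid_point[of L] by (simp add: L_def card_image inj_on_subset)
  moreover have "DC C D 0 (vector [C, 0]) (grid_point L ` G)"
    using assms(1,2) by (simp add: L_def DC_grid_configuration norm_vector_2)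
  moreover have "SINR 0 (vector [C, 0]) (grid_point L ` G) P No (eta \<alpha>)
      \<le> (1/7) * ((1 + 2 * C * (2 + D)) / (1 + C)) powr \<alpha> / S"
    if "0 < P" "S = (\<Sum>k = 1..K. 1 / real k powr (\<alpha> - 1))" "0 < S" for P S
  proof -
    have "1 \<le> K" using that(2,3) by (cases K) auto
    then have "SINR 0 (vector [C, 0]) (grid_point L ` G) P No (eta \<alpha>)
        \<le> (1/8) * ((1 + 2 * C * (2 + D)) / (1 + C)) powr \<alpha> / S"
      unfolding L_def that(2) using assms \<open>finite G\<close> that(1)
      by (intro SINR_grid_le) (auto simp: G_def B_def)
    also have "\<dots> \<le> (1/7) * ((1 + 2 * C * (2 + D)) / (1 + C)) powr \<alpha> / S"
      using that(3) by (intro divide_right_mono mult_right_mono) auto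
    finally show ?thesis .
  qed
  ultimately show ?thesis unfolding K_def by (metis finite_imageI)
qed

theorem lemma3:
  fixes No \<alpha> :: real
  assumes "No > 0" and "\<alpha> > 2"
  shows
   "(\<forall>C D :: real. \<forall>m :: nat. C > 0 \<longrightarrow> D > 0 \<longrightarrow> m > 0 \<longrightarrow>
      (\<exists>t r :: point. \<exists>T :: point set. finite T \<and> card T = m \<and> DC C D t r T \<and>
         (\<forall>P > 0. let S = (\<Sum>k = 1..nat \<lfloor>sqrt (real m / 7) - 2\<rfloor>. 1 / real k powr (\<alpha> - 1)) in
            S > 0 \<longrightarrow>
            SINR t r T P No (eta \<alpha>) \<le> (1/7) * ((1 + 2 * C * (2 + D)) / (1 + C)) powr \<alpha> / S)))
    \<and>
    (\<forall>\<beta> C D :: real. \<beta> > 0 \<longrightarrow> C > 0 \<longrightarrow> D > 0 \<longrightarrow>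
      (1/7) * ((1 + 2 * C * (2 + D)) / (1 + C)) powr \<alpha>
         / (\<Sum>k. 1 / real (Suc k) powr (\<alpha> - 1)) < \<beta> \<longrightarrow>
      \<not> ensures_SINR \<beta> No (eta \<alpha>) C D \<and>
      (\<exists>t r :: point. \<exists>T :: point set. finite T \<and> DC C D t r T \<and>
         (\<forall>P > 0. SINR t r T P No (eta \<alpha>) < \<beta>)))
    \<and>
    (\<forall>\<beta> :: real. \<beta> > 0 \<longrightarrow>
      (1/7) / (\<Sum>k. 1 / real (Suc k) powr (\<alpha> - 1)) < \<beta> \<longrightarrow>
      (\<exists>\<epsilon> > 0. \<forall>C D :: real. 0 < C \<longrightarrow> C < \<epsilon> \<longrightarrow> 0 < D \<longrightarrow> D < \<epsilon> \<longrightarrow>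
         \<not> ensures_SINR \<beta> No (eta \<alpha>) C D))"
  using assms
  apply (intro conjI allI impI)
  subgoal unfolding Let_def by (intro configuration_of_card_exists) auto
  subgoal by (intro not_ensures_SINR_if_bad_configuration bad_configuration_exists) auto
  subgoal by (intro bad_configuration_exists) auto
  subgoal by (intro small_parameters_not_ensure_SINR) auto
  done

end
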